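(* Let $m\le n$ and let $g:\mathbb{R}^n\to\mathbb{R}^m$ have components $g_i(x)=\frac12(A_ix,x)+(b_i,x)$, $i=1,\dots,m$, with symmetric $A_i\in\mathbb{R}^{n\times n}$ and $b_i\in\mathbb{R}^n$. Let $H\in\mathbb{R}^{m\times n}$ be the matrix with rows $b_i^T$, assume $H$ has rank $m$, and let $\mu_0>0$ be its smallest singular value. Let $L>0$ satisfy $\|g'(x)-g'(x')\|_2\le L\|x-x'\|_2$ for all $x,x'\in\mathbb{R}^n$. Then for every $y\in\mathbb{R}^m$ with $\|y\|_2<\frac{\mu_0^2}{4L}$ the equation $g(x)=y$ has a solution $x^*(y)$ with $\|x^*(y)\|_2\le\frac{\mu_0}{2L}$.
   Context: All norms are Euclidean; for matrices $\|\cdot\|_2$ is the spectral (operator) norm. $g'(x)$ is the $m\times n$ Jacobian with rows $(A_ix+b_i)^T$. *)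

theory Defs
  imports "HOL-Analysis.Analysis"
begin

text \<open>Smallest singular value of an m x n matrix H with m \<le> n: the square root of the
  smallest eigenvalue of H H^T (the singular values of H are the square roots of the
  m eigenvalues of the symmetric positive semidefinite matrix H H^T).\<close>
definition smallest_singular_value :: "real^'n^'m \<Rightarrow> real" where
  "smallest_singular_value H =
     sqrt (Min {lam. \<exists>v. v \<noteq> 0 \<and> (H ** transpose H) *v v = lam *\<^sub>R v})"

definition spectral_norm :: "real^'n^'m \<Rightarrow> real" where
  "spectral_norm M = onorm (\<lambda>v. M *v v)"

end

theory Submission
  imports Defs
begin

text \<open>The Jacobian g' is affine with g'(0) = H, so on the ball of radius r = \<mu>0/(2L) the map g
  differs from its linearisation H by a perturbation with Lipschitz constant L r = \<mu>0/2.
  The minimum-norm right inverse P = H^T (H H^T)^-1 has norm 1/\<mu>0, hence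
  x \<mapsto> P (H x - g x + y) is a 1/2-contraction of that ball whenever |y| < \<mu>0^2/(4L), and its fixed
  point solves g x = y.\<close>

lemma inner_matrix_vector_symmetric:
  fixes C :: "real^'n^'n"
  assumes "transpose C = C"
  shows "u \<bullet> (C *v v) = (C *v u) \<bullet> v"
  by (metis assms dot_lmul_matrix transpose_matrix_vector)

lemma psd_quadratic_form_zero_imp_kernel:
  fixes C :: "real^'n^'n"
  assumes sym: "transpose C = C"
    and psd: "\<And>u. 0 \<le> u \<bullet> (C *v u)"
    and zero: "v \<bullet> (C *v v) = 0"
  shows "C *v v = 0"
proof -
  define w where "w = C *v v"
  define a where "a = w \<bullet> w"
  define q where "q = w \<bullet> (C *v w)"
  have expand: "(v - t *\<^sub>R w) \<bullet> (C *v (v - t *\<^sub>R w)) = t\<^sup>2 * q - 2 * t * a" for t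
    using zero inner_matrix_vector_symmetric[OF sym, of w v]
    by (simp add: a_def q_def w_def matrix_vector_mult_diff_distrib matrix_vector_mult_scaleR
        inner_diff_left inner_diff_right inner_commute power2_eq_square algebra_simps)
  have q: "0 \<le> q" unfolding q_def by (rule psd)
  \<comment> \<open>Otherwise the form is negative at v - t w for small t > 0.\<close>
  have "a \<le> 0"
  proof (rule ccontr)
    assume "\<not> a \<le> 0"
    then have a: "0 < a" by simp
    define t where "t = a / (q + 1)"
    have "0 < q + 1" using q by simp
    have t: "0 < t" "t * q \<le> a"
      using a q \<open>0 < q + 1\<close> by (auto simp: t_def field_simps)
    have "0 \<le> t\<^sup>2 * q - 2 * t * a"
      using psd expand by metis
    also have "\<dots> = t * (t * q - 2 * a)"
      by (simp add: power2_eq_square algebra_simps)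
    also have "\<dots> < 0"
      using a t by (intro mult_pos_neg) auto
    finally show False by simp
  qed
  then show ?thesis
    by (simp add: a_def w_def)
    (metis inner_eq_zero_iff inner_ge_zero order_antisym)
qed

lemma symmetric_matrix_min_eigenvalue:
  fixes B :: "real^'n^'n"
  assumes sym: "transpose B = B"
  obtains l v where "norm v = 1" "B *v v = l *\<^sub>R v" "\<And>u. l * (norm u)\<^sup>2 \<le> u \<bullet> (B *v u)"
proof -
  define f where "f v = v \<bullet> (B *v v)" for v
  have "continuous_on (sphere 0 1) f"
    unfolding f_def by (intro continuous_intros)
  moreover have "sphere (0::real^'n) 1 \<noteq> {}"
    using norm_axis_1 by (metis mem_sphere_0 empty_iff)
  ultimately obtain v where v: "norm v = 1" and min: "\<And>w. norm w = 1 \<Longrightarrow> f v \<le> f w"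
    using continuous_attains_inf[OF compact_sphere] by (metis mem_sphere_0)
  define l where "l = f v"
  have rayleigh: "l * (norm u)\<^sup>2 \<le> u \<bullet> (B *v u)" for u
  proof (cases "u = 0")
    case False
    have "l \<le> f (u /\<^sub>R norm u)"
      using False min l_def by simp
    also have "\<dots> = (u \<bullet> (B *v u)) / (norm u)\<^sup>2"
      by (simp add: f_def matrix_vector_mult_scaleR power2_eq_square divide_inverse mult.assoc)
    finally show ?thesis
      using False by (simp add: field_simps)
  qed simp
  define C where "C = B - l *\<^sub>R mat 1"
  have C: "u \<bullet> (C *v u) = u \<bullet> (B *v u) - l * (norm u)\<^sup>2" for u
    by (simp add: C_def matrix_vector_mult_diff_rdistrib scaleR_matrix_vector_assoc[symmetric]
        power2_norm_eq_inner inner_diff_right)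
  have "C *v v = 0"
  proof (rule psd_quadratic_form_zero_imp_kernel)
    have "transpose C = transpose B - l *\<^sub>R mat 1"
      by (simp add: C_def transpose_def mat_def vec_eq_iff)
    then show "transpose C = C"
      using sym by (simp add: C_def)
    show "0 \<le> u \<bullet> (C *v u)" for u
      using rayleigh[of u] C by simp
    show "v \<bullet> (C *v v) = 0"
      using C v by (simp add: l_def f_def)
  qed
  then have "B *v v = l *\<^sub>R v"
    by (simp add: C_def matrix_vector_mult_diff_rdistrib scaleR_matrix_vector_assoc[symmetric])
  with v rayleigh that show ?thesis by blast
qed

lemma symmetric_matrix_finite_eigenvalues:
  fixes B :: "real^'n^'n"
  assumes sym: "transpose B = B"
  shows "finite {l. \<exists>v. v \<noteq> 0 \<and> B *v v = l *\<^sub>R v}" (is "finite ?S")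
proof (rule ccontr)
  assume "infinite ?S"
  then obtain F where F: "finite F" "card F = Suc CARD('n)" "F \<subseteq> ?S"
    using infinite_arbitrarily_large by blast
  then have "\<forall>l\<in>F. \<exists>v. v \<noteq> 0 \<and> B *v v = l *\<^sub>R v"
    by blast
  then obtain e where e: "\<And>l. l \<in> F \<Longrightarrow> e l \<noteq> 0 \<and> B *v e l = l *\<^sub>R e l"
    by metis
  have orth: "e l1 \<bullet> e l2 = 0" if "l1 \<in> F" "l2 \<in> F" "l1 \<noteq> l2" for l1 l2
  proof -
    have "l2 * (e l1 \<bullet> e l2) = e l1 \<bullet> (B *v e l2)"
      using e[OF that(2)] by simp
    also have "\<dots> = (B *v e l1) \<bullet> e l2"
      by (rule inner_matrix_vector_symmetric[OF sym])
    also have "\<dots> = l1 * (e l1 \<bullet> e l2)"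
      using e[OF that(1)] by simp
    finally show ?thesis
      using that(3) by simp
  qed
  have inj: "inj_on e F"
    by (rule inj_onI) (metis e inner_eq_zero_iff orth)
  have "independent (e ` F)"
    by (rule pairwise_orthogonal_independent)
      (use e orth in \<open>auto simp: pairwise_def orthogonal_def\<close>)
  then have "card (e ` F) \<le> CARD('n)"
    using independent_bound by fastforce
  with F(2) card_image[OF inj] show False
    by simp
qed

lemma inner_matrix_mult_transpose:
  fixes H :: "real^'n^'m"
  shows "u \<bullet> ((H ** transpose H) *v v) = (transpose H *v u) \<bullet> (transpose H *v v)"
  by (simp add: matrix_vector_mul_assoc[symmetric] dot_lmul_matrix[symmetric])

lemma smallest_singular_value_attained:
  fixes H :: "real^'n^'m"
  obtains v where "norm v = 1" "norm (transpose H *v v) = smallest_singular_value H"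
    and "\<And>u. smallest_singular_value H * norm u \<le> norm (transpose H *v u)"
proof -
  define B where "B = H ** transpose H"
  have sym: "transpose B = B"
    by (simp add: B_def matrix_transpose_mul)
  have form: "u \<bullet> (B *v u) = (norm (transpose H *v u))\<^sup>2" for u
    by (simp add: B_def inner_matrix_mult_transpose power2_norm_eq_inner)
  obtain l v where v: "norm v = 1" "B *v v = l *\<^sub>R v"
    and rayleigh: "\<And>u. l * (norm u)\<^sup>2 \<le> u \<bullet> (B *v u)"
    using symmetric_matrix_min_eigenvalue[OF sym] by blast
  have l: "l = (norm (transpose H *v v))\<^sup>2"
    using v form[of v] by (simp add: power2_norm_eq_inner[symmetric])
  \<comment> \<open>The least eigenvalue of H H^T is the minimum of the Rayleigh quotient, so it is l.\<close>
  define S where "S = {l. \<exists>v. v \<noteq> 0 \<and> B *v v = l *\<^sub>R v}"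
  have "Min S = l"
  proof (rule Min_eqI)
    show "finite S"
      unfolding S_def by (rule symmetric_matrix_finite_eigenvalues[OF sym])
    show "l \<in> S"
      unfolding S_def using v by (intro CollectI exI[of _ v]) auto
    fix l' assume "l' \<in> S"
    then obtain w where "w \<noteq> 0" "B *v w = l' *\<^sub>R w"
      by (auto simp: S_def)
    then show "l \<le> l'"
      using rayleigh[of w] by (simp add: power2_norm_eq_inner)
  qed
  then have sv: "smallest_singular_value H = norm (transpose H *v v)"
    by (simp add: smallest_singular_value_def S_def B_def l)
  have "smallest_singular_value H * norm u \<le> norm (transpose H *v u)" for u
  proof -
    have "(smallest_singular_value H * norm u)\<^sup>2 \<le> (norm (transpose H *v u))\<^sup>2"
      using rayleigh[of u] form[of u] by (simp add: sv l power_mult_distrib)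
    then show ?thesis
      by (rule power2_le_imp_le) simp
  qed
  with v sv that show ?thesis
    by metis
qed

lemma smallest_singular_value_pos:
  fixes H :: "real^'n^'m"
  assumes "rank H = CARD('m)"
  shows "0 < smallest_singular_value H"
proof -
  obtain v where "norm v = 1" "norm (transpose H *v v) = smallest_singular_value H"
    using smallest_singular_value_attained by blast
  moreover have "inj ((*v) (transpose H))"
    using assms by (simp add: rank_transpose full_rank_injective[symmetric])
  ultimately show ?thesis
    by (metis injD matrix_vector_mult_0_right norm_eq_zero norm_ge_zero order_less_le zero_neq_one norm_zero)
qed

lemma full_rank_right_inverse_bound:
  fixes H :: "real^'n^'m"
  assumes rank: "rank H = CARD('m)"
  obtains P where "H ** P = mat 1" "\<And>z. smallest_singular_value H * norm (P *v z) \<le> norm z"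
proof -
  define \<mu> where "\<mu> = smallest_singular_value H"
  define B where "B = H ** transpose H"
  have \<mu>: "0 < \<mu>"
    unfolding \<mu>_def using rank by (rule smallest_singular_value_pos)
  have lower: "\<mu> * norm u \<le> norm (transpose H *v u)" for u
    unfolding \<mu>_def using smallest_singular_value_attained by metis
  have "inj ((*v) B)"
  unfolding linear_injective_0[OF matrix_vector_mul_linear]
  proof (intro allI impI)
    fix u assume "B *v u = 0"
    then have "transpose H *v u = 0"
      using inner_matrix_mult_transpose[of u H u] by (simp add: B_def)
    then show "u = 0"
      using lower[of u] \<mu> by (simp add: mult_le_0_iff)
  qed
  then obtain M where "M ** B = mat 1"
    using matrix_left_invertible_injective by blast
  then have BM: "B ** M = mat 1"
    by (simp add: matrix_left_right_inverse)
  define P where "P = transpose H ** M"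
  have "\<mu> * norm (P *v z) \<le> norm z" for z
  proof -
    define u where "u = M *v z"
    have Pz: "P *v z = transpose H *v u"
      by (simp add: P_def u_def matrix_vector_mul_assoc)
    have "(norm (P *v z))\<^sup>2 = u \<bullet> z"
      using inner_matrix_mult_transpose[of u H u] BM
      by (simp add: Pz power2_norm_eq_inner B_def[symmetric] u_def matrix_vector_mul_assoc)
    also have "\<dots> \<le> norm u * norm z"
      by (rule norm_cauchy_schwarz)
    finally have "\<mu> * (norm (P *v z))\<^sup>2 \<le> \<mu> * norm u * norm z"
      using \<mu> by (simp add: mult.assoc)
    also have "\<dots> \<le> norm (P *v z) * norm z"
      using lower[of u] by (simp add: Pz mult_right_mono)
    finally show ?thesis
      by (cases "P *v z = 0") (auto simp: power2_eq_square mult.commute)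
  qed
  moreover have "H ** P = mat 1"
    using BM by (simp add: P_def B_def matrix_mul_assoc)
  ultimately show ?thesis
    using that \<mu>_def by blast
qed

lemma quadratic_map_diff_midpoint_derivative:
  fixes A :: "'m::finite \<Rightarrow> real^'n^'n"
  assumes symm: "\<And>i. transpose (A i) = A i"
    and g_def: "\<And>x. g x = (\<chi> i. (1/2) * ((A i *v x) \<bullet> x) + b i \<bullet> x)"
    and g'_def: "\<And>x. g' x = (\<chi> i. A i *v x + b i)"
  shows "g x - g x' = g' ((1/2) *\<^sub>R (x + x')) *v (x - x')"
proof -
  have "(A i *v (x + x')) \<bullet> (x - x') = (A i *v x) \<bullet> x - (A i *v x') \<bullet> x'" for i
  proof -
    have "(A i *v x) \<bullet> x' = (A i *v x') \<bullet> x"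
      using inner_matrix_vector_symmetric[OF symm, of x' i x] by (simp add: inner_commute)
    then show ?thesis
      by (simp add: matrix_vector_right_distrib inner_add_left inner_diff_right)
  qed
  then show ?thesis
    by (simp add: vec_eq_iff g_def g'_def matrix_vector_mul_component matrix_vector_mult_scaleR
        inner_add_left inner_diff_right algebra_simps)
qed

lemma norm_matrix_vector_le_spectral_norm:
  fixes M :: "real^'n^'m"
  shows "norm (M *v v) \<le> spectral_norm M * norm v"
  unfolding spectral_norm_def by (rule onorm) simp

lemma solvable_by_contraction:
  fixes g :: "real^'n \<Rightarrow> real^'m" and H :: "real^'n^'m"
  assumes HP: "H ** P = mat 1"
    and P_bound: "\<And>z. \<mu> * norm (P *v z) \<le> norm z"
    and \<mu>: "0 < \<mu>" and r: "0 \<le> r"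
    and near_linear: "\<And>x x'. norm x \<le> r \<Longrightarrow> norm x' \<le> r \<Longrightarrow>
      norm (H *v (x - x') - (g x - g x')) \<le> \<mu> / 2 * norm (x - x')"
    and y: "norm (y - g 0) \<le> \<mu> * r / 2"
  shows "\<exists>x. norm x \<le> r \<and> g x = y"
proof -
  define T where "T x = P *v (H *v x - g x + y)" for x
  have P_bound': "norm (P *v z) \<le> norm z / \<mu>" for z
    using P_bound[of z] \<mu> by (simp add: pos_le_divide_eq mult.commute)
  have contraction: "norm (T x - T x') \<le> 1/2 * norm (x - x')"
    if "norm x \<le> r" "norm x' \<le> r" for x x'
  proof -
    have "T x - T x' = P *v ((H *v x - g x + y) - (H *v x' - g x' + y))"
      by (simp only: T_def matrix_vector_mult_diff_distrib)
    also have "(H *v x - g x + y) - (H *v x' - g x' + y) = H *v (x - x') - (g x - g x')"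
      by (simp add: matrix_vector_mult_diff_distrib)
    finally have "norm (T x - T x') \<le> norm (H *v (x - x') - (g x - g x')) / \<mu>"
      using P_bound' by simp
    also have "\<dots> \<le> (\<mu> / 2 * norm (x - x')) / \<mu>"
      using near_linear[OF that] \<mu> by (intro divide_right_mono) auto
    finally show ?thesis
      using \<mu> by simp
  qed
  have "\<mu> * norm (T 0) \<le> \<mu> * (r / 2)"
    using P_bound[of "y - g 0"] y by (simp add: T_def)
  then have T0: "norm (T 0) \<le> r / 2"
    using \<mu> by simp
  have "T ` cball 0 r \<subseteq> cball 0 r"
  proof clarsimp
    fix x :: "real^'n" assume x: "norm x \<le> r"
    have "norm (T x) \<le> norm (T x - T 0) + norm (T 0)"
      using norm_triangle_ineq[of "T x - T 0" "T 0"] by simp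
    also have "\<dots> \<le> r"
      using contraction[of x 0] T0 x r by simp
    finally show "norm (T x) \<le> r" .
  qed
  then have "\<exists>!x\<in>cball 0 r. T x = x"
    using r contraction by (intro Banach_fix[where c = "1/2"]) (auto simp: complete_eq_closed dist_norm)
  then obtain x where x: "norm x \<le> r" "T x = x"
    by auto
  then have "H *v x = H *v x - g x + y"
    by (metis HP T_def matrix_vector_mul_assoc matrix_vector_mul_lid)
  with x show ?thesis
    by (auto simp: algebra_simps)
qed

theorem theorem5:
  fixes A :: "'m::finite \<Rightarrow> real^'n::finite^'n"
    and b :: "'m \<Rightarrow> real^'n"
    and g :: "real^'n \<Rightarrow> real^'m"
    and g' :: "real^'n \<Rightarrow> real^'n^'m"
    and H :: "real^'n^'m"
    and L \<mu>0 :: real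
    and y :: "real^'m"
  assumes mn: "CARD('m) \<le> CARD('n)"
    and symm: "\<And>i. transpose (A i) = A i"
    and g_def: "\<And>x. g x = (\<chi> i. (1/2) * ((A i *v x) \<bullet> x) + b i \<bullet> x)"
    and g'_def: "\<And>x. g' x = (\<chi> i. A i *v x + b i)"
    and H_def: "H = (\<chi> i. b i)"
    and rankH: "rank H = CARD('m)"
    and mu0: "\<mu>0 = smallest_singular_value H"
    and Lpos: "L > 0"
    and Lip: "\<And>x x'. spectral_norm (g' x - g' x') \<le> L * norm (x - x')"
    and y_small: "norm y < \<mu>0^2 / (4 * L)"
  shows "\<exists>x. g x = y \<and> norm x \<le> \<mu>0 / (2 * L)"
proof -
  define r where "r = \<mu>0 / (2 * L)"
  obtain P where HP: "H ** P = mat 1" and P_bound: "\<And>z. \<mu>0 * norm (P *v z) \<le> norm z"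
    using full_rank_right_inverse_bound[OF rankH] unfolding mu0 by blast
  have \<mu>0: "0 < \<mu>0"
    unfolding mu0 using rankH by (rule smallest_singular_value_pos)
  have r: "0 \<le> r"
    using \<mu>0 Lpos by (simp add: r_def)
  have near_linear: "norm (H *v (x - x') - (g x - g x')) \<le> \<mu>0 / 2 * norm (x - x')"
    if "norm x \<le> r" "norm x' \<le> r" for x x'
  proof -
    define m where "m = (1/2) *\<^sub>R (x + x')"
    have "norm m \<le> r"
      using that norm_triangle_ineq[of x x'] by (simp add: m_def)
    have "H *v (x - x') - (g x - g x') = (g' 0 - g' m) *v (x - x')"
      using quadratic_map_diff_midpoint_derivative[OF symm g_def g'_def, of x x']
      by (simp add: m_def g'_def H_def matrix_vector_mult_diff_rdistrib)
    also have "norm \<dots> \<le> spectral_norm (g' 0 - g' m) * norm (x - x')"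
      by (rule norm_matrix_vector_le_spectral_norm)
    also have "\<dots> \<le> L * norm m * norm (x - x')"
      using Lip[of 0 m] by (intro mult_right_mono) auto
    also have "\<dots> \<le> L * r * norm (x - x')"
      using \<open>norm m \<le> r\<close> Lpos by (intro mult_right_mono) auto
    finally show ?thesis
      using Lpos by (simp add: r_def)
  qed
  have "g 0 = 0"
    by (simp add: g_def vec_eq_iff)
  then have "norm (y - g 0) \<le> \<mu>0 * r / 2"
    using y_small Lpos by (simp add: r_def power2_eq_square)
  then obtain x where "norm x \<le> r" "g x = y"
    using solvable_by_contraction[OF HP P_bound \<mu>0 r near_linear] by blast
  then show ?thesis
    by (auto simp: r_def)
qed

end
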